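(* Let $n\ge0$ and run the Tiden–Arnborg algorithm on $\sigma(n)$. At no stage does the current system contain an equation of the form $y_{2^j}=^?T\times x_k$ with $j\ge 0$ (i.e., no lateral edge leaves a node $y_{2^j}$).
   Context: Variables are $T$, $x_s$, $y_s$ with $s$ a string over $\{1,2\}$ ($x=x_\varepsilon$, $y=y_\varepsilon$); $2^j$ denotes the string of $j$ twos. For $n\ge0$, $\sigma(n)$ is the system consisting of, for all $0\le i\le n$: $x_{1^i}=^?x_{1^{i+1}}+x_{1^i2}$, $y_{2^i}=^?y_{2^i1}+y_{2^{i+1}}$, $y_{2^i1}=^?T\times x_{1^i2}$, $x=^?T\times y$, $x_{1^{i+1}}=^?x_{1^{i+2}}+x_{1^{i+1}2}$. The algorithm (for the theory $x\times(y+z)=x\times y+x\times z$) repeatedly applies sum transformations to the current system: whenever a variable $U_i$ (with $U\in\{x,y\}$) has both equations $U_i=^?T\times W_j$ and $U_i=^?U_{i1}+U_{i2}$ (such a variable is called a peak), the sum equation $U_i=^?U_{i1}+U_{i2}$ is replaced by $W_j=^?W_{j1}+W_{j2}$, $U_{i1}=^?T\times W_{j1}$, $U_{i2}=^?T\times W_{j2}$ (keeping $U_i=^?T\times W_j$), where the new variables $W_{j1},W_{j2}$ are identified with the existing children of $W_j$ if $W_j$ already has a sum equation $W_j=^?W_{j1}+W_{j2}$. A lateral edge from $u$ to $v$ means the equation $u=^?T\times v$ is present. *)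

theory Defs
  imports Main
begin

datatype dig = D1 | D2

datatype var = T | X "dig list" | Y "dig list"

text \<open>Equations: Sum u v w means u =? v + w;
  Mul u v means u =? T * v (a lateral edge from u to v).\<close>
datatype eqn = Sum var var var | Mul var var

fun child :: "var \<Rightarrow> dig \<Rightarrow> var" where
  "child (X s) d = X (s @ [d])"
| "child (Y s) d = Y (s @ [d])"
| "child T d = T"

definition ones :: "nat \<Rightarrow> dig list" where "ones i = replicate i D1"
definition twos :: "nat \<Rightarrow> dig list" where "twos i = replicate i D2"

definition sigma :: "nat \<Rightarrow> eqn set" where
  "sigma n = (\<Union>i\<in>{0..n}.
     { Sum (X (ones i)) (X (ones (Suc i))) (X (ones i @ [D2])),
       Sum (Y (twos i)) (Y (twos i @ [D1])) (Y (twos (Suc i))),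
       Mul (Y (twos i @ [D1])) (X (ones i @ [D2])),
       Mul (X []) (Y []),
       Sum (X (ones (Suc i))) (X (ones (Suc (Suc i)))) (X (ones (Suc i) @ [D2])) })"

definition sum_step :: "eqn set \<Rightarrow> eqn set \<Rightarrow> bool" where
  "sum_step S S' \<longleftrightarrow>
     (\<exists>u w v1 v2 c1 c2.
        Mul u w \<in> S \<and> Sum u v1 v2 \<in> S \<and>
        (Sum w c1 c2 \<in> S \<or>
         ((\<forall>a b. Sum w a b \<notin> S) \<and> c1 = child w D1 \<and> c2 = child w D2)) \<and>
        S' = (S - {Sum u v1 v2}) \<union> {Sum w c1 c2, Mul v1 c1, Mul v2 c2})"

end

theory Submission
  imports Defs
begin

text \<open>Call the nodes y_{2^j} the spine. The spine is closed under taking parents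
  (a child U_{s1} is never on it, and y_{s2} = y_{2^j} forces y_s = y_{2^(j-1)}).
  The invariant is that no lateral edge leaves the spine and every sum equation
  with a spine child has a spine parent. A sum
  transformation at a peak U_i only adds lateral edges from the children of U_i,
  which lie off the spine because the peak U_i itself does. The new sum equation
  W_j = W_{j1} + W_{j2} either already existed or has the children of W_j as its
  children, and parent-closure covers that case.\<close>

definition spine_sealed :: "(var \<Rightarrow> bool) \<Rightarrow> eqn set \<Rightarrow> bool" where
  "spine_sealed P S \<longleftrightarrow>
     (\<forall>u w. Mul u w \<in> S \<longrightarrow> \<not> P u) \<and>
     (\<forall>u v1 v2. Sum u v1 v2 \<in> S \<longrightarrow> P v1 \<or> P v2 \<longrightarrow> P u)"

lemma sum_step_preserves_spine_sealed:
  assumes parent_closed: "\<And>w d. P (child w d) \<Longrightarrow> P w"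
    and step: "sum_step S S'" and sealed: "spine_sealed P S"
  shows "spine_sealed P S'"
proof -
  from step obtain u w v1 v2 c1 c2 where
    peak_mul: "Mul u w \<in> S" and peak_sum: "Sum u v1 v2 \<in> S" and
    children: "Sum w c1 c2 \<in> S \<or> c1 = child w D1 \<and> c2 = child w D2" and
    S': "S' = (S - {Sum u v1 v2}) \<union> {Sum w c1 c2, Mul v1 c1, Mul v2 c2}"
    unfolding sum_step_def by blast
  have "\<not> P u" using sealed peak_mul unfolding spine_sealed_def by blast
  then have off_spine: "\<not> P v1" "\<not> P v2"
    using sealed peak_sum unfolding spine_sealed_def by blast+
  have new_sum: "P c1 \<or> P c2 \<longrightarrow> P w"
    using children sealed parent_closed unfolding spine_sealed_def by blast
  show ?thesis
    using sealed off_spine new_sum unfolding spine_sealed_def S' by blast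
qed

lemma rtranclp_sum_step_preserves_spine_sealed:
  assumes "\<And>w d. P (child w d) \<Longrightarrow> P w"
    and "sum_step\<^sup>*\<^sup>* S S'" and "spine_sealed P S"
  shows "spine_sealed P S'"
  using assms(2,3)
  by (induction rule: rtranclp_induct) (auto intro: sum_step_preserves_spine_sealed assms(1))

definition on_y_spine :: "var \<Rightarrow> bool" where
  "on_y_spine v \<longleftrightarrow> (\<exists>j. v = Y (twos j))"

lemma snoc_D1_neq_twos: "s @ [D1] \<noteq> twos j"
  by (metis dig.distinct(1) in_set_replicate last_in_set last_snoc snoc_eq_iff_butlast twos_def)

lemma snoc_D2_eq_twos: "s @ [D2] = twos j \<Longrightarrow> s = twos (j - 1)"
  by (cases j) (auto simp: twos_def simp flip: replicate_append_same)

lemma on_y_spine_child: "on_y_spine (child w d) \<Longrightarrow> on_y_spine w"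
  by (cases w; cases d) (auto simp: on_y_spine_def snoc_D1_neq_twos dest: snoc_D2_eq_twos)

lemma spine_sealed_sigma: "spine_sealed on_y_spine (sigma n)"
  using snoc_D1_neq_twos
  by (auto simp: spine_sealed_def sigma_def on_y_spine_def twos_def
      simp flip: replicate_append_same) metis

theorem lemma2:
  fixes n :: nat
  assumes "sum_step\<^sup>*\<^sup>* (sigma n) S"
  shows "\<forall>j k. Mul (Y (twos j)) (X k) \<notin> S"
proof -
  have "spine_sealed on_y_spine S"
    using on_y_spine_child assms spine_sealed_sigma
    by (rule rtranclp_sum_step_preserves_spine_sealed)
  then show ?thesis unfolding spine_sealed_def on_y_spine_def by blast
qed

end
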